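(* For every $\alpha$ with $1/2<\alpha<3/4$ and every $(x,y)\in[0,1]^2\setminus\{(0,0)\}$, we have $G_\alpha^n(x,y)\to(2/3,2/3)$ as $n\to\infty$. That is, the fixed point $(2/3,2/3)$ attracts all points of the square except the fixed point $(0,0)$.
   Context: Let $\tau:[0,1]\to[0,1]$ be the symmetric tent map, $\tau(x)=2x$ for $0\le x<1/2$ and $\tau(x)=2-2x$ for $1/2\le x\le 1$. For $0<\alpha<1$ define $G_\alpha:[0,1]^2\to[0,1]^2$ by $G_\alpha(x,y)=(y,\tau(\alpha y+(1-\alpha)x))$. *)

theory Defs
  imports "HOL-Analysis.Analysis"
begin

definition tent :: "real \<Rightarrow> real" where
  "tent x = (if x < 1/2 then 2 * x else 2 - 2 * x)"

definition G :: "real \<Rightarrow> real \<times> real \<Rightarrow> real \<times> real" where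
  "G \<alpha> p = (snd p, tent (\<alpha> * snd p + (1 - \<alpha>) * fst p))"

end

theory Submission
  imports Defs
begin

(* The quadratic form lyapunov, centred at the fixed point (2/3, 2/3), decreases along G
   by at least dissipation \<alpha> * (x - y)^2, which is positive for 1/2 < \<alpha> < 3/4. Hence the
   two coordinates of an orbit merge, and the second coordinate becomes a sequence with
   vanishing steps that is almost fixed by the tent map, so it settles near 0 or near 2/3.
   It cannot settle near 0: there G is linear and expands (1 - \<alpha>) x + y by the factor
   1 + \<alpha>, which pushes every orbit other than the origin away from it. *)

lemma funpow_invariant:
  assumes "\<And>x. x \<in> A \<Longrightarrow> f x \<in> A" "x \<in> A"
  shows "(f ^^ n) x \<in> A"
  using assms by (induction n) auto

lemma dissipated_tendsto_zero:
  fixes V d :: "nat \<Rightarrow> real"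
  assumes "\<And>n. V (Suc n) + d n \<le> V n"
    and "\<And>n. 0 \<le> d n" "\<And>n. 0 \<le> V n"
  shows "d \<longlonglongrightarrow> 0"
proof (rule Lim_null_comparison)
  have "decseq V"
    using assms by (intro decseq_SucI) (smt (verit))
  then obtain L where "V \<longlonglongrightarrow> L"
    using decseq_convergent assms(3) by blast
  then show "(\<lambda>n. V n - V (Suc n)) \<longlonglongrightarrow> 0"
    using tendsto_diff[OF _ LIMSEQ_Suc] by fastforce
  show "\<forall>\<^sub>F n in sequentially. norm (d n) \<le> V n - V (Suc n)"
    using assms by (simp add: algebra_simps)
qed

lemma convex_comb_unit_interval:
  fixes \<alpha> x y :: real
  assumes "\<alpha> \<in> {0..1}" "x \<in> {0..1}" "y \<in> {0..1}"
  shows "\<alpha> * y + (1 - \<alpha>) * x \<in> {0..1}"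
proof -
  have "\<alpha> * y \<le> \<alpha>" "(1 - \<alpha>) * x \<le> 1 - \<alpha>"
    using assms by (auto intro: mult_left_le)
  then show ?thesis
    using assms by auto
qed

lemma tent_unit_interval: "u \<in> {0..1} \<Longrightarrow> tent u \<in> {0..1}"
  by (auto simp: tent_def)

lemma tent_eq_0_iff: "tent u = 0 \<longleftrightarrow> u = 0 \<or> u = 1"
  by (auto simp: tent_def)

lemma tent_lipschitz: "\<bar>tent u - tent v\<bar> \<le> 2 * \<bar>u - v\<bar>"
  by (auto simp: tent_def abs_if)

lemma tent_almost_fixed:
  assumes "\<bar>tent u - u\<bar> < e"
  shows "\<bar>u\<bar> < e \<or> \<bar>u - 2/3\<bar> < e/3"
  using assms by (auto simp: tent_def abs_if split: if_splits)

lemma tent_almost_fixed_seq_tendsto: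
  fixes b :: "nat \<Rightarrow> real"
  assumes steps: "(\<lambda>n. b (Suc n) - b n) \<longlonglongrightarrow> 0"
    and almost_fixed: "(\<lambda>n. tent (b n) - b n) \<longlonglongrightarrow> 0"
    and large: "\<exists>\<^sub>F n in sequentially. 1/2 \<le> b n"
  shows "b \<longlonglongrightarrow> 2/3"
proof (rule LIMSEQ_I)
  fix r :: real
  assume "0 < r"
  define e where "e = min r (1/4)"
  have e: "0 < e" "e \<le> r" "e \<le> 1/4"
    using \<open>0 < r\<close> by (auto simp: e_def)
  have "\<forall>\<^sub>F n in sequentially. \<bar>b (Suc n) - b n\<bar> < e \<and> \<bar>tent (b n) - b n\<bar> < e"
    using steps almost_fixed \<open>0 < e\<close> by (auto simp: tendsto_iff dist_real_def intro: eventually_conj)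
  then obtain N where N: "\<And>n. N \<le> n \<Longrightarrow> \<bar>b (Suc n) - b n\<bar> < e \<and> \<bar>tent (b n) - b n\<bar> < e"
    by (auto simp: eventually_sequentially)
  have near: "b n < e \<or> \<bar>b n - 2/3\<bar> < e/3" if "N \<le> n" for n
    using tent_almost_fixed N[OF that] by fastforce
  \<comment> \<open>a step shorter than e cannot jump from below e to within e/3 of 2/3\<close>
  have stay: "b (Suc n) < e" if "N \<le> n" "b n < e" for n
    using near[of "Suc n"] N[OF \<open>N \<le> n\<close>] that e by auto
  have "\<bar>b n - 2/3\<bar> < e" if "N \<le> n" for n
  proof (rule ccontr)
    assume "\<not> ?thesis"
    then have "b n < e"
      using near[OF that] e by auto
    have "b m < e" if "n \<le> m" for m
      using that by (induction m rule: dec_induct) (use stay \<open>N \<le> n\<close> \<open>b n < e\<close> in auto)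
    then have "\<forall>\<^sub>F m in sequentially. b m < 1/2"
      unfolding eventually_sequentially using e by force
    with large show False
      by (simp add: frequently_def not_le)
  qed
  then show "\<exists>N. \<forall>n\<ge>N. norm (b n - 2/3) < r"
    using e by force
qed

lemma G_unit_square:
  assumes "\<alpha> \<in> {0..1}" "p \<in> {0..1} \<times> {0..1}"
  shows "G \<alpha> p \<in> {0..1} \<times> {0..1}"
  using assms convex_comb_unit_interval tent_unit_interval by (auto simp: G_def)

lemma G_ne_origin:
  assumes "0 < \<alpha>" "\<alpha> < 1" "p \<in> {0..1} \<times> {0..1}" "p \<noteq> (0, 0)"
  shows "G \<alpha> p \<noteq> (0, 0)"
proof
  assume "G \<alpha> p = (0, 0)"
  then have "snd p = 0" and "tent ((1 - \<alpha>) * fst p) = 0"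
    by (auto simp: G_def prod_eq_iff)
  moreover have "(1 - \<alpha>) * fst p \<le> 1 - \<alpha>"
    using assms by (auto intro: mult_left_le)
  ultimately show False
    using assms by (auto simp: tent_eq_0_iff prod_eq_iff)
qed

lemma fst_funpow_G_Suc: "fst ((G \<alpha> ^^ Suc n) p) = snd ((G \<alpha> ^^ n) p)"
  by (simp add: G_def)

lemma snd_G_near_tent:
  assumes "\<alpha> \<in> {0..1}"
  shows "\<bar>snd (G \<alpha> (x, y)) - tent y\<bar> \<le> 2 * \<bar>x - y\<bar>"
proof -
  have "(\<alpha> * y + (1 - \<alpha>) * x) - y = (1 - \<alpha>) * (x - y)"
    by (simp add: algebra_simps)
  then have "\<bar>(\<alpha> * y + (1 - \<alpha>) * x) - y\<bar> = (1 - \<alpha>) * \<bar>x - y\<bar>"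
    using assms by (simp add: abs_mult)
  also have "\<dots> \<le> \<bar>x - y\<bar>"
    using assms by (simp add: mult_left_le_one_le)
  finally show ?thesis
    using tent_lipschitz[of "\<alpha> * y + (1 - \<alpha>) * x" y] by (simp add: G_def)
qed

definition dissipation :: "real \<Rightarrow> real" where
  "dissipation \<alpha> = (2 * \<alpha> - 1) * (3 - 4 * \<alpha>) / 2"

(* On the branch \<alpha> y + (1 - \<alpha>) x \<ge> 1/2 the map G is affine with fixed point (2/3, 2/3);
   the coefficient of u^2 makes lyapunov decrease along it by exactly dissipation \<alpha> * (x - y)^2. *)
definition lyapunov :: "real \<Rightarrow> real \<times> real \<Rightarrow> real" where
  "lyapunov \<alpha> p = (let u = fst p - 2/3; v = snd p - 2/3
     in (4 * (1 - \<alpha>)^2 + dissipation \<alpha>) * u^2 + u * v + v^2)"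

lemma dissipation_pos: "1/2 < \<alpha> \<Longrightarrow> \<alpha> < 3/4 \<Longrightarrow> 0 < dissipation \<alpha>"
  by (simp add: dissipation_def)

lemma lyapunov_nonneg:
  assumes "1/2 < \<alpha>" "\<alpha> < 3/4"
  shows "0 \<le> lyapunov \<alpha> p"
proof -
  define c where "c = 4 * (1 - \<alpha>)^2 + dissipation \<alpha>"
  define u where "u = fst p - 2/3"
  define v where "v = snd p - 2/3"
  have "1/4 \<le> 4 * (1 - \<alpha>)^2"
    using assms power_mono[of "1/4" "1 - \<alpha>" 2] by (simp add: power2_eq_square)
  then have "0 \<le> (c - 1/4) * u^2"
    using dissipation_pos[OF assms] by (simp add: c_def)
  moreover have "lyapunov \<alpha> p = (c - 1/4) * u^2 + (u/2 + v)^2"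
    by (simp add: lyapunov_def c_def u_def v_def Let_def power2_eq_square field_simps)
  ultimately show ?thesis by simp
qed

lemma lyapunov_G_decrease:
  assumes "0 \<le> y"
  shows "lyapunov \<alpha> (G \<alpha> (x, y)) + dissipation \<alpha> * (x - y)^2 \<le> lyapunov \<alpha> (x, y)"
proof -
  define w where "w = \<alpha> * y + (1 - \<alpha>) * x"
  have upper: "lyapunov \<alpha> (y, 2 - 2 * w) + dissipation \<alpha> * (x - y)^2 = lyapunov \<alpha> (x, y)"
    unfolding lyapunov_def dissipation_def w_def Let_def
    by (simp add: field_simps power2_eq_square; algebra)
  have lower: "lyapunov \<alpha> (y, 2 * w) - lyapunov \<alpha> (y, 2 - 2 * w) = (4 * w - 2) * y"
    by (simp add: lyapunov_def Let_def power2_eq_square field_simps)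
  show ?thesis
  proof (cases "w < 1/2")
    case True
    then have "(4 * w - 2) * y \<le> 0"
      using assms by (simp add: mult_nonpos_nonneg)
    with True upper lower show ?thesis
      by (simp add: G_def tent_def w_def[symmetric])
  next
    case False
    with upper show ?thesis
      by (simp add: G_def tent_def w_def[symmetric])
  qed
qed

lemma G_lower_branch_expands:
  assumes "\<alpha> \<in> {0..1}" "p \<in> {0..<1/2} \<times> {0..<1/2}"
  shows "(1 + \<alpha>) * ((1 - \<alpha>) * fst p + snd p) \<le> (1 - \<alpha>) * fst (G \<alpha> p) + snd (G \<alpha> p)"
proof -
  obtain x y where p: "p = (x, y)" by fastforce
  have "\<alpha> * y + (1 - \<alpha>) * x \<le> \<alpha> * max x y + (1 - \<alpha>) * max x y"
    using assms p by (intro add_mono mult_left_mono) auto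
  also have "\<dots> < 1/2"
    using assms p by (simp add: algebra_simps max_def)
  finally have "\<alpha> * y + (1 - \<alpha>) * x < 1/2" .
  then have "(1 - \<alpha>) * fst (G \<alpha> p) + snd (G \<alpha> p) = 2 * (1 - \<alpha>) * x + (1 + \<alpha>) * y"
    by (simp add: G_def tent_def p algebra_simps)
  moreover have "0 \<le> (1 - \<alpha>) * (1 - \<alpha>) * x"
    using assms p by simp
  ultimately show ?thesis
    by (simp add: p algebra_simps)
qed

lemma G_orbit_frequently_snd_ge_half:
  assumes "0 < \<alpha>" "\<alpha> < 1" "p \<in> {0..1} \<times> {0..1}" "p \<noteq> (0, 0)"
  shows "\<exists>\<^sub>F n in sequentially. 1/2 \<le> snd ((G \<alpha> ^^ n) p)"
proof (rule ccontr)
  define q where "q n = (G \<alpha> ^^ n) p" for n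
  define L where "L n = (1 - \<alpha>) * fst (q n) + snd (q n)" for n
  have q: "q n \<in> {0..1} \<times> {0..1} - {(0, 0)}" for n
    unfolding q_def using assms G_unit_square G_ne_origin by (intro funpow_invariant) auto
  assume "\<not> ?thesis"
  then obtain N where small: "\<And>n. n \<ge> N \<Longrightarrow> snd (q n) < 1/2"
    by (auto simp: not_frequently eventually_sequentially q_def not_le)
  have expand: "(1 + \<alpha>) * L n \<le> L (Suc n)" if "N < n" for n
  proof -
    have "fst (q n) = snd (q (n - 1))"
      using that fst_funpow_G_Suc[where n = "n - 1"] by (simp add: q_def)
    then have "q n \<in> {0..<1/2} \<times> {0..<1/2}"
      using that small[of n] small[of "n - 1"] q[of n] by (auto simp: mem_Times_iff)
    then show ?thesis
      using assms G_lower_branch_expands[of \<alpha> "q n"] by (simp add: L_def q_def)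
  qed
  have grow: "(1 + \<alpha>)^k * L (Suc N) \<le> L (Suc N + k)" for k
  proof (induction k)
    case (Suc k)
    have "(1 + \<alpha>)^Suc k * L (Suc N) \<le> (1 + \<alpha>) * L (Suc N + k)"
      using Suc assms by (simp add: mult.assoc)
    also have "\<dots> \<le> L (Suc N + Suc k)"
      using expand[of "Suc N + k"] by simp
    finally show ?case .
  qed simp
  have "0 < L (Suc N)"
    using q[of "Suc N"] assms by (auto simp: L_def prod_eq_iff add_pos_nonneg add_nonneg_pos)
  moreover obtain k where "2 / L (Suc N) < (1 + \<alpha>)^k"
    using real_arch_pow[of "1 + \<alpha>"] assms by auto
  ultimately have "2 < L (Suc N + k)"
    using grow[of k] by (simp add: divide_less_eq)
  moreover have "L (Suc N + k) \<le> 2"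
    using q[of "Suc N + k"] assms mult_le_one[of "1 - \<alpha>" "fst (q (Suc N + k))"]
    by (auto simp: L_def)
  ultimately show False by simp
qed

lemma G_orbit_approaches_diagonal:
  assumes "1/2 < \<alpha>" "\<alpha> < 3/4" "p \<in> {0..1} \<times> {0..1}"
  shows "(\<lambda>n. fst ((G \<alpha> ^^ n) p) - snd ((G \<alpha> ^^ n) p)) \<longlonglongrightarrow> 0"
proof -
  define q where "q n = (G \<alpha> ^^ n) p" for n
  have "q n \<in> {0..1} \<times> {0..1}" for n
    unfolding q_def using assms G_unit_square by (intro funpow_invariant) auto
  then have "lyapunov \<alpha> (q (Suc n)) + dissipation \<alpha> * (fst (q n) - snd (q n))^2 \<le> lyapunov \<alpha> (q n)" for n
    using lyapunov_G_decrease[of "snd (q n)" \<alpha> "fst (q n)"] by (auto simp: q_def mem_Times_iff)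
  then have "(\<lambda>n. dissipation \<alpha> * (fst (q n) - snd (q n))^2) \<longlonglongrightarrow> 0"
    using assms dissipation_pos[OF assms(1,2)] lyapunov_nonneg[OF assms(1,2)]
    by (intro dissipated_tendsto_zero[where V = "\<lambda>n. lyapunov \<alpha> (q n)"]) auto
  then have "(\<lambda>n. (fst (q n) - snd (q n))^2) \<longlonglongrightarrow> 0"
    using tendsto_mult_right_zero[of _ sequentially "1 / dissipation \<alpha>"] dissipation_pos[OF assms(1,2)]
    by (simp add: mult.assoc[symmetric])
  then have "(\<lambda>n. \<bar>fst (q n) - snd (q n)\<bar>) \<longlonglongrightarrow> 0"
    using tendsto_real_sqrt by fastforce
  then show ?thesis
    by (simp add: tendsto_rabs_zero_iff q_def)
qed

lemma G_orbit_snd_tendsto: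
  assumes "1/2 < \<alpha>" "\<alpha> < 3/4" "p \<in> {0..1} \<times> {0..1}" "p \<noteq> (0, 0)"
  shows "(\<lambda>n. snd ((G \<alpha> ^^ n) p)) \<longlonglongrightarrow> 2/3"
proof (rule tent_almost_fixed_seq_tendsto)
  define a where "a n = fst ((G \<alpha> ^^ n) p)" for n
  define b where "b n = snd ((G \<alpha> ^^ n) p)" for n
  have diag: "(\<lambda>n. a n - b n) \<longlonglongrightarrow> 0"
    unfolding a_def b_def using assms(1-3) by (rule G_orbit_approaches_diagonal)
  have "b (Suc n) - b n = - (a (Suc n) - b (Suc n))" for n
    by (simp only: a_def b_def fst_funpow_G_Suc)
  then show steps: "(\<lambda>n. b (Suc n) - b n) \<longlonglongrightarrow> 0"
    using tendsto_minus[OF LIMSEQ_Suc[OF diag]] by simp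
  have near_tent: "\<bar>b (Suc n) - tent (b n)\<bar> \<le> 2 * \<bar>a n - b n\<bar>" for n
    using assms snd_G_near_tent[of \<alpha> "a n" "b n"] by (simp add: a_def b_def)
  have "\<forall>n. norm (tent (b n) - b n) \<le> \<bar>b (Suc n) - b n\<bar> + 2 * \<bar>a n - b n\<bar>"
    using near_tent by (smt (verit) real_norm_def)
  moreover have "(\<lambda>n. \<bar>b (Suc n) - b n\<bar> + 2 * \<bar>a n - b n\<bar>) \<longlonglongrightarrow> 0"
    using tendsto_add_zero[OF tendsto_rabs_zero[OF steps] tendsto_mult_right_zero[OF tendsto_rabs_zero[OF diag]]]
    by simp
  ultimately show "(\<lambda>n. tent (b n) - b n) \<longlonglongrightarrow> 0"
    by (rule Lim_null_comparison[OF always_eventually])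
  show "\<exists>\<^sub>F n in sequentially. 1/2 \<le> b n"
    unfolding b_def using assms by (intro G_orbit_frequently_snd_ge_half) auto
qed

theorem theorem6:
  fixes \<alpha> x y :: real
  assumes "1/2 < \<alpha>" and "\<alpha> < 3/4"
    and "x \<in> {0..1}" and "y \<in> {0..1}" and "(x, y) \<noteq> (0, 0)"
  shows "(\<lambda>n. (G \<alpha> ^^ n) (x, y)) \<longlonglongrightarrow> (2/3, 2/3)"
proof -
  let ?a = "\<lambda>n. fst ((G \<alpha> ^^ n) (x, y))" and ?b = "\<lambda>n. snd ((G \<alpha> ^^ n) (x, y))"
  have b: "?b \<longlonglongrightarrow> 2/3"
    using assms by (intro G_orbit_snd_tendsto) auto
  then have "(\<lambda>n. ?a (Suc n)) \<longlonglongrightarrow> 2/3"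
    by (simp only: fst_funpow_G_Suc)
  then have "?a \<longlonglongrightarrow> 2/3"
    by (rule LIMSEQ_imp_Suc)
  from tendsto_Pair[OF this b] show ?thesis
    by simp
qed

end
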